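(* Let $\mathcal{P}$ be a collection of cells. Let $a=(i,j)$, $b=(k,l)$ with $i<k$, $j<l$, and $\beta=(p,q)$ with $p>k$, $q>l$, and suppose $[a,b]$ and $[\alpha,\beta]$ with $\alpha=(i,l)$ are inner intervals of $\mathcal{P}$ (so $\alpha$ is the upper left corner $c$ of $[a,b]$). Put $c=\alpha=(i,l)$, $d=(k,j)$, $\gamma=(i,q)$, $\delta=(p,l)$, $h=(k,q)$, $r=(p,j)$. Let $<^{\mathsf{P}}$ be a $\mathsf{P}$-order on $V(\mathcal{P})$ and suppose that the leading monomials of $f_{a,b}$ and $f_{\alpha,\beta}$ with respect to $<^{\mathsf{P}}_{\mathrm{lex}}$ are not coprime. Then $S(f_{a,b},f_{\alpha,\beta})$ reduces to $0$ modulo $\mathcal{G}$ with respect to $<^{\mathsf{P}}_{\mathrm{lex}}$ if and only if one of the following holds: (1) $x_dx_\delta x_\gamma<^{\mathsf{P}}_{\mathrm{lex}}x_\beta x_ax_b$, and ($h,\delta<^{\mathsf{P}}b$ or $h,\delta<^{\mathsf{P}}\beta$); (2) $x_dx_\delta x_\gamma<^{\mathsf{P}}_{\mathrm{lex}}x_\beta x_ax_b$, $[d,\delta]$ is an inner interval of $\mathcal{P}$, and ($r,\gamma<^{\mathsf{P}}a$ or $r,\gamma<^{\mathsf{P}}\beta$); (3) $x_\beta x_ax_b<^{\mathsf{P}}_{\mathrm{lex}}x_dx_\delta x_\gamma$, and ($h,a<^{\mathsf{P}}d$ or $h,a<^{\mathsf{P}}\gamma$); (4) $x_\beta x_ax_b<^{\mathsf{P}}_{\mathrm{lex}}x_dx_\delta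 x_\gamma$, $[d,\delta]$ is an inner interval of $\mathcal{P}$, and ($r,b<^{\mathsf{P}}d$ or $r,b<^{\mathsf{P}}\delta$).
   Context: For $a=(i,j), b=(k,l)\in\mathbb{Z}^2$ with $a\le b$ componentwise, the interval $[a,b]=\{(m,n)\in\mathbb{Z}^2: i\le m\le k,\ j\le n\le l\}$; it is proper if $i<k$ and $j<l$, in which case $a,b$ are its diagonal corners and $(i,l)$ (upper left), $(k,j)$ (lower right) its anti-diagonal corners. A cell is a proper interval $[v,v+(1,1)]$; its vertices are its four corners. A collection of cells $\mathcal{P}$ is a nonempty finite set of cells; $V(\mathcal{P})$ is the set of all vertices of its cells. A proper interval $[a,b]$ is an inner interval of $\mathcal{P}$ if every cell $[v,v+(1,1)]\subseteq[a,b]$ belongs to $\mathcal{P}$. Let $K$ be a field and $S=K[x_v: v\in V(\mathcal{P})]$. For an inner interval $[a,b]$ with upper left corner $c$ and lower right corner $d$, put $f_{a,b}=x_ax_b-x_cx_d$; $\mathcal{G}$ is the set of all such inner 2-minors of $\mathcal{P}$. A $\mathsf{P}$-order is a total order $<^{\mathsf{P}}$ on $V(\mathcal{P})$; $<^{\mathsf{P}}_{\mathrm{lex}}$ is the lexicographic monomial order on $S$ with $x_u<x_v\iff u<^{\mathsf{P}}v$. For vertices $u,v,w$, "$u,v<^{\mathsf{P}}w$" means $u<^{\mathsf{P}}w$ and $v<^{\mathsf{P}}w$. *)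

theory Defs
  imports "HOL-Library.Poly_Mapping"
begin

type_synonym vertex = "int \<times> int"

text \<open>A cell [v, v+(1,1)] is represented by its lower left corner v;
  a collection of cells is a nonempty finite set of such corners.\<close>

definition collection_of_cells :: "vertex set \<Rightarrow> bool" where
  "collection_of_cells P \<longleftrightarrow> finite P \<and> P \<noteq> {}"

definition cell_vertices :: "vertex \<Rightarrow> vertex set" where
  "cell_vertices v = {v, (fst v + 1, snd v), (fst v, snd v + 1), (fst v + 1, snd v + 1)}"

definition V :: "vertex set \<Rightarrow> vertex set" where
  "V P = (\<Union>v\<in>P. cell_vertices v)"

definition interval :: "vertex \<Rightarrow> vertex \<Rightarrow> vertex set" where
  "interval a b = {(m, n). fst a \<le> m \<and> m \<le> fst b \<and> snd a \<le> n \<and> n \<le> snd b}"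

definition proper_interval :: "vertex \<Rightarrow> vertex \<Rightarrow> bool" where
  "proper_interval a b \<longleftrightarrow> fst a < fst b \<and> snd a < snd b"

definition inner_interval :: "vertex set \<Rightarrow> vertex \<Rightarrow> vertex \<Rightarrow> bool" where
  "inner_interval P a b \<longleftrightarrow> proper_interval a b \<and>
     (\<forall>v. interval v (fst v + 1, snd v + 1) \<subseteq> interval a b \<longrightarrow> v \<in> P)"

definition P_order :: "vertex set \<Rightarrow> (vertex \<Rightarrow> vertex \<Rightarrow> bool) \<Rightarrow> bool" where
  "P_order P lt \<longleftrightarrow>
     (\<forall>u v. lt u v \<longrightarrow> u \<in> V P \<and> v \<in> V P) \<and>
     (\<forall>u. \<not> lt u u) \<and>
     (\<forall>u v w. lt u v \<longrightarrow> lt v w \<longrightarrow> lt u w) \<and>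
     (\<forall>u\<in>V P. \<forall>v\<in>V P. u \<noteq> v \<longrightarrow> lt u v \<or> lt v u)"

type_synonym monom = "vertex \<Rightarrow>\<^sub>0 nat"
type_synonym 'k mpoly = "monom \<Rightarrow>\<^sub>0 'k"

definition var :: "vertex \<Rightarrow> ('k::comm_ring_1) mpoly" where
  "var v = Poly_Mapping.single (Poly_Mapping.single v 1) 1"

definition in_S :: "vertex set \<Rightarrow> ('k::comm_ring_1) mpoly \<Rightarrow> bool" where
  "in_S P f \<longleftrightarrow> (\<forall>m\<in>Poly_Mapping.keys f. Poly_Mapping.keys (m::monom) \<subseteq> V P)"

definition lex_less :: "(vertex \<Rightarrow> vertex \<Rightarrow> bool) \<Rightarrow> monom \<Rightarrow> monom \<Rightarrow> bool" where
  "lex_less lt m1 m2 \<longleftrightarrow>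
     (\<exists>v. Poly_Mapping.lookup m1 v < Poly_Mapping.lookup m2 v \<and> (\<forall>w. lt v w \<longrightarrow> Poly_Mapping.lookup m1 w = Poly_Mapping.lookup m2 w))"

definition lex_le :: "(vertex \<Rightarrow> vertex \<Rightarrow> bool) \<Rightarrow> monom \<Rightarrow> monom \<Rightarrow> bool" where
  "lex_le lt m1 m2 \<longleftrightarrow> m1 = m2 \<or> lex_less lt m1 m2"

definition lead_monom :: "(vertex \<Rightarrow> vertex \<Rightarrow> bool) \<Rightarrow> ('k::comm_ring_1) mpoly \<Rightarrow> monom" where
  "lead_monom lt f = (THE m. m \<in> Poly_Mapping.keys f \<and> (\<forall>m'\<in>Poly_Mapping.keys f. lex_le lt m' m))"

definition lead_coeff_m :: "(vertex \<Rightarrow> vertex \<Rightarrow> bool) \<Rightarrow> ('k::comm_ring_1) mpoly \<Rightarrow> 'k" where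
  "lead_coeff_m lt f = Poly_Mapping.lookup f (lead_monom lt f)"

definition monom_lcm :: "monom \<Rightarrow> monom \<Rightarrow> monom" where
  "monom_lcm m1 m2 = m1 + (m2 - m1)"

definition coprime_monom :: "monom \<Rightarrow> monom \<Rightarrow> bool" where
  "coprime_monom m1 m2 \<longleftrightarrow> (\<forall>v. Poly_Mapping.lookup m1 v = 0 \<or> Poly_Mapping.lookup m2 v = 0)"

definition S_poly :: "(vertex \<Rightarrow> vertex \<Rightarrow> bool) \<Rightarrow> ('k::field) mpoly \<Rightarrow> 'k mpoly \<Rightarrow> 'k mpoly" where
  "S_poly lt f g =
    (let L = monom_lcm (lead_monom lt f) (lead_monom lt g) in
       Poly_Mapping.single (L - lead_monom lt f) (1 / lead_coeff_m lt f) * f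
     - Poly_Mapping.single (L - lead_monom lt g) (1 / lead_coeff_m lt g) * g)"

definition inner_minor :: "vertex \<Rightarrow> vertex \<Rightarrow> ('k::comm_ring_1) mpoly" where
  "inner_minor a b = var a * var b - var (fst a, snd b) * var (fst b, snd a)"

definition G :: "vertex set \<Rightarrow> ('k::comm_ring_1) mpoly set" where
  "G P = {inner_minor a b | a b. inner_interval P a b}"

text \<open>f reduces to 0 modulo G (Herzog--Hibi): f has a standard expression
  f = sum of u_g g over g in G with remainder 0, i.e. lm(u_g g) \<le> lm(f) whenever u_g g \<noteq> 0.\<close>
definition reduces_to_zero ::
  "vertex set \<Rightarrow> (vertex \<Rightarrow> vertex \<Rightarrow> bool) \<Rightarrow> ('k::field) mpoly \<Rightarrow> bool" where
  "reduces_to_zero P lt f \<longleftrightarrow>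
     (\<exists>u :: 'k mpoly \<Rightarrow> 'k mpoly.
        (\<forall>g\<in>G P. in_S P (u g)) \<and>
        f = (\<Sum>g\<in>G P. u g * g) \<and>
        (\<forall>g\<in>G P. u g * g \<noteq> 0 \<longrightarrow> f \<noteq> 0 \<and> lex_le lt (lead_monom lt (u g * g)) (lead_monom lt f)))"

end

theory Submission
  imports Defs
begin

text \<open>
  The four corners of \<open>[a,b]\<close> and of \<open>[\<alpha>,\<beta>]\<close> have only \<open>\<alpha>\<close> in common, so non-coprimality
  forces \<open>in(f_ab) = x_\<alpha> x_d\<close> and \<open>in(f_\<alpha>\<beta>) = x_\<alpha> x_\<beta>\<close>, and then
  \<open>S(f_ab, f_\<alpha>\<beta>) = x_d x_\<delta> x_\<gamma> - x_\<beta> x_a x_b\<close>. This binomial splits as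
  \<open>-x_\<delta> f_ah - x_a f_b\<beta>\<close> through the middle monomial \<open>x_a x_h x_\<delta>\<close> and, when \<open>[d,\<delta>]\<close>
  (equivalently \<open>[a,\<beta>]\<close>) is inner, as \<open>x_\<gamma> f_d\<delta> - x_b f_a\<beta>\<close> through \<open>x_b x_\<gamma> x_r\<close>; such a
  splitting is a standard expression as soon as its middle monomial lies below \<open>in(S)\<close>.
  Conversely, a standard expression makes \<open>in(S)\<close> divisible by the leading monomial of an
  inner minor, and the only inner minors whose leading monomial can divide \<open>x_d x_\<delta> x_\<gamma>\<close>
  or \<open>x_\<beta> x_a x_b\<close> are the four above, for which cofactor times trailing monomial is again
  a middle monomial. Comparing two squarefree monomials that differ in two variables amounts
  to comparing their largest variables, which turns this into conditions (1)--(4).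
\<close>

section \<open>Monomials\<close>

abbreviation X :: "vertex \<Rightarrow> monom" where
  "X v \<equiv> Poly_Mapping.single v 1"

abbreviation monomial :: "monom \<Rightarrow> 'k::comm_ring_1 mpoly" where
  "monomial m \<equiv> Poly_Mapping.single m 1"

lemma keys_add_monom [simp]:
  "Poly_Mapping.keys (m + m' :: 'a \<Rightarrow>\<^sub>0 nat) = Poly_Mapping.keys m \<union> Poly_Mapping.keys m'"
  by (auto simp: in_keys_iff lookup_add)

lemma monom_neqI: "v \<in> Poly_Mapping.keys m \<Longrightarrow> v \<notin> Poly_Mapping.keys m' \<Longrightarrow> m \<noteq> m'"
  by auto

lemma keys_binomial:
  "A \<noteq> B \<Longrightarrow> Poly_Mapping.keys (monomial A - monomial B :: 'k::comm_ring_1 mpoly) = {A, B}"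
  by (auto simp: in_keys_iff lookup_minus lookup_single when_def split: if_splits)

lemma lookup_times_monomial:
  "Poly_Mapping.lookup (f * monomial s) (t + s) = Poly_Mapping.lookup (f :: 'k::comm_ring_1 mpoly) t"
proof -
  have "(\<Sum>b. (1::'k) when s = b when t + s = a + b) = (1 when a = t)" for a
    by (cases "a = t") (simp_all add: when_when)
  then show ?thesis
    by (simp add: lookup_mult lookup_single mult_when)
qed

lemma keys_times_monomial:
  "Poly_Mapping.keys (f * monomial s :: 'k::comm_ring_1 mpoly) \<subseteq> (\<lambda>t. t + s) ` Poly_Mapping.keys f"
  using keys_mult[of f "monomial s"] by auto

lemma var_times_binomial:
  "(var v :: 'k::comm_ring_1 mpoly) * (monomial A - monomial B) = monomial (X v + A) - monomial (X v + B)"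
  by (simp add: var_def right_diff_distrib mult_single)

lemma inner_minor_eq:
  "(inner_minor a b :: 'k::comm_ring_1 mpoly) =
     monomial (X a + X b) - monomial (X (fst a, snd b) + X (fst b, snd a))"
  by (simp add: inner_minor_def var_def mult_single)

lemma coprime_monom_iff: "coprime_monom m m' \<longleftrightarrow> Poly_Mapping.keys m \<inter> Poly_Mapping.keys m' = {}"
  by (auto simp: coprime_monom_def in_keys_iff)

section \<open>Inner intervals\<close>

lemma cell_subset_interval_iff:
  "interval v (fst v + 1, snd v + 1) \<subseteq> interval a b \<longleftrightarrow>
     fst a \<le> fst v \<and> fst v < fst b \<and> snd a \<le> snd v \<and> snd v < snd b"
proof
  assume sub: "interval v (fst v + 1, snd v + 1) \<subseteq> interval a b"
  have "v \<in> interval a b" "(fst v + 1, snd v + 1) \<in> interval a b"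
    using sub[THEN subsetD, of v] sub[THEN subsetD, of "(fst v + 1, snd v + 1)"]
    by (auto simp: interval_def)
  then show "fst a \<le> fst v \<and> fst v < fst b \<and> snd a \<le> snd v \<and> snd v < snd b"
    by (auto simp: interval_def)
qed (auto simp: interval_def)

lemma inner_interval_iff:
  "inner_interval P a b \<longleftrightarrow> fst a < fst b \<and> snd a < snd b \<and>
     (\<forall>x y. fst a \<le> x \<and> x < fst b \<and> snd a \<le> y \<and> y < snd b \<longrightarrow> (x, y) \<in> P)"
  by (auto simp: inner_interval_def proper_interval_def cell_subset_interval_iff)

lemma interval_subset_V:
  assumes "inner_interval P a b"
  shows "interval a b \<subseteq> V P"
proof
  fix v assume "v \<in> interval a b"
  then obtain x y where v: "v = (x, y)" "fst a \<le> x" "x \<le> fst b" "snd a \<le> y" "y \<le> snd b"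
    by (auto simp: interval_def)
  define c where "c = (min x (fst b - 1), min y (snd b - 1))"
  have "fst a \<le> fst c \<and> fst c < fst b \<and> snd a \<le> snd c \<and> snd c < snd b"
    using v assms unfolding c_def inner_interval_iff by auto
  then have "c \<in> P"
    using assms unfolding inner_interval_iff by (cases c) auto
  moreover have "v \<in> cell_vertices c"
    using v unfolding c_def cell_vertices_def by auto
  ultimately show "v \<in> V P"
    unfolding V_def by blast
qed

lemma finite_G:
  assumes "finite P"
  shows "finite (G P :: 'k::comm_ring_1 mpoly set)"
proof -
  have "finite (V P)"
    using assms by (simp add: V_def cell_vertices_def)
  moreover have "a \<in> V P \<and> b \<in> V P" if "inner_interval P a b" for a b
    using interval_subset_V[OF that] that
    by (auto simp: interval_def inner_interval_iff)
  then have "(G P :: 'k mpoly set) \<subseteq> (\<lambda>(a, b). inner_minor a b) ` (V P \<times> V P)"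
    unfolding G_def by auto
  ultimately show ?thesis
    by (meson finite_SigmaI finite_imageI finite_subset)
qed

section \<open>The lexicographic order and leading monomials\<close>

definition lex_max :: "(vertex \<Rightarrow> vertex \<Rightarrow> bool) \<Rightarrow> monom \<Rightarrow> monom \<Rightarrow> monom" where
  "lex_max lt m m' = (if lex_less lt m m' then m' else m)"

lemma lex_max_cases: "lex_max lt m m' = m \<or> lex_max lt m m' = m'"
  by (simp add: lex_max_def)

lemma lex_less_irrefl: "\<not> lex_less lt m m"
  by (simp add: lex_less_def)

lemma lex_less_add_left_iff: "lex_less lt (t + m) (t + m') \<longleftrightarrow> lex_less lt m m'"
  by (simp add: lex_less_def lookup_add)

lemma lex_le_add_left: "lex_le lt m m' \<Longrightarrow> lex_le lt (t + m) (t + m')"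
  by (auto simp: lex_le_def lex_less_add_left_iff)

lemma finite_has_maximal_wrt:
  assumes "finite D" "D \<noteq> {}"
    and irrefl: "\<And>x. x \<in> D \<Longrightarrow> \<not> R x x"
    and trans: "\<And>x y z. x \<in> D \<Longrightarrow> y \<in> D \<Longrightarrow> z \<in> D \<Longrightarrow> R x y \<Longrightarrow> R y z \<Longrightarrow> R x z"
  shows "\<exists>x\<in>D. \<forall>y\<in>D. \<not> R x y"
  using assms
proof (induction D rule: finite_ne_induct)
  case (singleton x)
  then show ?case by blast
next
  case (insert x D)
  then obtain y where y: "y \<in> D" "\<forall>z\<in>D. \<not> R y z" by blast
  show ?case
  proof (cases "R y x")
    case True
    then have "\<not> R x z" if "z \<in> insert x D" for z
      using that y insert.prems by blast
    then show ?thesis by blast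
  next
    case False
    then show ?thesis using y by blast
  qed
qed

locale P_ordered =
  fixes P :: "vertex set" and lt :: "vertex \<Rightarrow> vertex \<Rightarrow> bool"
  assumes P_order: "P_order P lt"
begin

abbreviation supported :: "monom \<Rightarrow> bool" where
  "supported m \<equiv> Poly_Mapping.keys m \<subseteq> V P"

lemma lt_irrefl: "\<not> lt u u"
  using P_order unfolding P_order_def by blast

lemma lt_trans: "lt u v \<Longrightarrow> lt v w \<Longrightarrow> lt u w"
  using P_order unfolding P_order_def by blast

lemma lt_total: "u \<in> V P \<Longrightarrow> v \<in> V P \<Longrightarrow> u \<noteq> v \<Longrightarrow> lt u v \<or> lt v u"
  using P_order unfolding P_order_def by blast

lemma lex_less_trans:
  assumes "supported m2" "supported m3" "lex_less lt m1 m2" "lex_less lt m2 m3"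
  shows "lex_less lt m1 m3"
proof -
  obtain v where v: "Poly_Mapping.lookup m1 v < Poly_Mapping.lookup m2 v"
      and above_v: "\<And>x. lt v x \<Longrightarrow> Poly_Mapping.lookup m1 x = Poly_Mapping.lookup m2 x"
    using assms(3) unfolding lex_less_def by blast
  obtain w where w: "Poly_Mapping.lookup m2 w < Poly_Mapping.lookup m3 w"
      and above_w: "\<And>x. lt w x \<Longrightarrow> Poly_Mapping.lookup m2 x = Poly_Mapping.lookup m3 x"
    using assms(4) unfolding lex_less_def by blast
  have "v \<in> V P" "w \<in> V P"
    using v w assms(1,2) by (auto simp: in_keys_iff)
  then consider "lt v w" | "v = w" | "lt w v"
    using lt_total by blast
  then show ?thesis
  proof cases
    case 1
    then have "Poly_Mapping.lookup m1 w < Poly_Mapping.lookup m3 w"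
      using above_v w by simp
    moreover have "Poly_Mapping.lookup m1 x = Poly_Mapping.lookup m3 x" if "lt w x" for x
      using that 1 above_v above_w lt_trans by metis
    ultimately show ?thesis
      unfolding lex_less_def by blast
  next
    case 2
    then have "Poly_Mapping.lookup m1 v < Poly_Mapping.lookup m3 v"
      using v w by simp
    moreover have "Poly_Mapping.lookup m1 x = Poly_Mapping.lookup m3 x" if "lt v x" for x
      using that 2 above_v above_w by simp
    ultimately show ?thesis
      unfolding lex_less_def by blast
  next
    case 3
    then have "Poly_Mapping.lookup m1 v < Poly_Mapping.lookup m3 v"
      using v above_w by simp
    moreover have "Poly_Mapping.lookup m1 x = Poly_Mapping.lookup m3 x" if "lt v x" for x
      using that 3 above_v above_w lt_trans by metis
    ultimately show ?thesis
      unfolding lex_less_def by blast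
  qed
qed

lemma lex_less_asym: "supported m1 \<Longrightarrow> supported m2 \<Longrightarrow> lex_less lt m1 m2 \<Longrightarrow> \<not> lex_less lt m2 m1"
  using lex_less_trans[of m2 m1 m1] lex_less_irrefl by blast

lemma lex_less_total:
  assumes "supported m1" "supported m2" "m1 \<noteq> m2"
  shows "lex_less lt m1 m2 \<or> lex_less lt m2 m1"
proof -
  define D where "D = {v. Poly_Mapping.lookup m1 v \<noteq> Poly_Mapping.lookup m2 v}"
  have D_keys: "D \<subseteq> Poly_Mapping.keys m1 \<union> Poly_Mapping.keys m2"
    unfolding D_def by (auto simp: in_keys_iff)
  then have "finite D"
    by (rule finite_subset) simp
  moreover have "D \<noteq> {}"
  proof
    assume "D = {}"
    then have "m1 = m2"
      unfolding D_def by (auto intro: poly_mapping_eqI)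
    then show False
      using assms(3) by contradiction
  qed
  ultimately have "\<exists>v\<in>D. \<forall>w\<in>D. \<not> lt v w"
    by (rule finite_has_maximal_wrt) (use lt_irrefl lt_trans in blast)+
  then obtain v where "v \<in> D" and top: "\<And>w. lt v w \<Longrightarrow> w \<notin> D"
    by blast
  then have "\<And>w. lt v w \<Longrightarrow> Poly_Mapping.lookup m1 w = Poly_Mapping.lookup m2 w"
    and "Poly_Mapping.lookup m1 v < Poly_Mapping.lookup m2 v \<or>
         Poly_Mapping.lookup m2 v < Poly_Mapping.lookup m1 v"
    unfolding D_def by auto
  then show ?thesis
    unfolding lex_less_def by (metis (no_types, lifting))
qed

lemma lex_le_less_trans:
  "supported m2 \<Longrightarrow> supported m3 \<Longrightarrow> lex_le lt m1 m2 \<Longrightarrow> lex_less lt m2 m3 \<Longrightarrow> lex_less lt m1 m3"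
  unfolding lex_le_def using lex_less_trans by blast

lemma lex_le_antisym:
  "supported m1 \<Longrightarrow> supported m2 \<Longrightarrow> lex_le lt m1 m2 \<Longrightarrow> lex_le lt m2 m1 \<Longrightarrow> m1 = m2"
  unfolding lex_le_def using lex_less_asym by blast

lemma lex_le_lex_max:
  assumes "supported m" "supported m'"
  shows "lex_le lt m (lex_max lt m m')" "lex_le lt m' (lex_max lt m m')"
  using lex_less_total[OF assms] by (auto simp: lex_max_def lex_le_def)

lemma lex_max_le:
  "lex_le lt m M \<Longrightarrow> lex_le lt m' M \<Longrightarrow> lex_le lt (lex_max lt m m') M"
  by (simp add: lex_max_def)

lemma lead_monom_eqI:
  assumes "\<forall>m'\<in>Poly_Mapping.keys f. supported m'" "m \<in> Poly_Mapping.keys f"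
    and "\<forall>m'\<in>Poly_Mapping.keys f. lex_le lt m' m"
  shows "lead_monom lt f = m"
  unfolding lead_monom_def
proof (rule the_equality)
  fix m'' assume "m'' \<in> Poly_Mapping.keys f \<and> (\<forall>m'\<in>Poly_Mapping.keys f. lex_le lt m' m'')"
  then show "m'' = m"
    using assms lex_le_antisym by blast
qed (use assms in blast)

lemma lead_monom_greatest:
  assumes "f \<noteq> 0" "\<forall>m\<in>Poly_Mapping.keys f. supported m"
  shows "lead_monom lt f \<in> Poly_Mapping.keys f"
    and "\<forall>m\<in>Poly_Mapping.keys f. lex_le lt m (lead_monom lt f)"
proof -
  obtain m where m: "m \<in> Poly_Mapping.keys f" "\<forall>m'\<in>Poly_Mapping.keys f. \<not> lex_less lt m m'"
    using finite_has_maximal_wrt[of "Poly_Mapping.keys f" "lex_less lt"] assms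
      lex_less_irrefl lex_less_trans by (metis finite_keys keys_eq_empty)
  then have "\<forall>m'\<in>Poly_Mapping.keys f. lex_le lt m' m"
    using assms(2) lex_less_total unfolding lex_le_def by blast
  then have "lead_monom lt f = m"
    using lead_monom_eqI assms(2) m(1) by blast
  then show "lead_monom lt f \<in> Poly_Mapping.keys f"
    and "\<forall>m\<in>Poly_Mapping.keys f. lex_le lt m (lead_monom lt f)"
    using m(1) \<open>\<forall>m'\<in>_. lex_le lt m' m\<close> by simp_all
qed

lemma lead_monom_binomial:
  assumes "A \<noteq> B" "supported A" "supported B"
  shows "lead_monom lt (monomial A - monomial B :: 'k::comm_ring_1 mpoly) = lex_max lt A B"
  by (rule lead_monom_eqI)
    (use assms lex_le_lex_max[OF assms(2,3)] in \<open>auto simp: keys_binomial lex_max_def\<close>)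

lemma lead_monom_times_binomial_ordered:
  assumes u: "u \<noteq> 0" "\<forall>m\<in>Poly_Mapping.keys u. supported m"
    and AB: "supported A" "supported B" "lex_less lt B A"
  shows "lead_monom lt (u * (monomial A - monomial B :: 'k::comm_ring_1 mpoly)) = lead_monom lt u + A"
proof -
  define t0 where "t0 = lead_monom lt u"
  have t0: "t0 \<in> Poly_Mapping.keys u" "\<forall>t\<in>Poly_Mapping.keys u. lex_le lt t t0"
    using lead_monom_greatest[OF u] unfolding t0_def by auto
  have supp: "supported (t + C)" if "t \<in> Poly_Mapping.keys u" "supported C" for t C
    using that u(2) by auto
  have B_below: "lex_less lt (t + B) (t0 + A)" if "t \<in> Poly_Mapping.keys u" for t
  proof -
    have "lex_le lt (t + B) (t0 + B)"
      using t0(2) that lex_le_add_left[of lt t t0 B] by (simp add: add.commute)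
    moreover have "lex_less lt (t0 + B) (t0 + A)"
      using AB(3) by (simp add: lex_less_add_left_iff)
    ultimately show ?thesis
      using lex_le_less_trans supp t0(1) AB by blast
  qed
  have keys_prod: "Poly_Mapping.keys (u * (monomial A - monomial B :: 'k mpoly))
      \<subseteq> (\<lambda>t. t + A) ` Poly_Mapping.keys u \<union> (\<lambda>t. t + B) ` Poly_Mapping.keys u"
    using keys_diff[of "u * monomial A" "u * monomial B"] keys_times_monomial[of u]
    by (auto simp: right_diff_distrib)
  have "Poly_Mapping.lookup (u * monomial B) (t0 + A) = 0"
  proof (rule ccontr)
    assume "Poly_Mapping.lookup (u * monomial B) (t0 + A) \<noteq> 0"
    then obtain t where "t \<in> Poly_Mapping.keys u" "t0 + A = t + B"
      using keys_times_monomial[of u B] by (auto simp: in_keys_iff)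
    then show False
      using B_below lex_less_irrefl by metis
  qed
  then have "Poly_Mapping.lookup (u * (monomial A - monomial B)) (t0 + A) = Poly_Mapping.lookup u t0"
    by (simp add: right_diff_distrib lookup_minus lookup_times_monomial)
  then have "t0 + A \<in> Poly_Mapping.keys (u * (monomial A - monomial B))"
    using t0(1) by (simp add: in_keys_iff)
  moreover have "lex_le lt m (t0 + A)" if "m \<in> Poly_Mapping.keys (u * (monomial A - monomial B))" for m
    using that keys_prod t0(2) B_below lex_le_add_left[of lt _ t0 A]
    by (fastforce simp: add.commute lex_le_def)
  ultimately show ?thesis
    unfolding t0_def[symmetric] using keys_prod supp AB
    by (intro lead_monom_eqI) blast+
qed

lemma lead_monom_times_binomial:
  assumes u: "u \<noteq> 0" "\<forall>m\<in>Poly_Mapping.keys u. supported m"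
    and AB: "A \<noteq> B" "supported A" "supported B"
  shows "lead_monom lt (u * (monomial A - monomial B :: 'k::comm_ring_1 mpoly)) =
    lead_monom lt u + lex_max lt A B"
proof (cases "lex_less lt A B")
  case True
  have "lead_monom lt (u * (monomial A - monomial B :: 'k mpoly)) =
      lead_monom lt (- (u * (monomial B - monomial A :: 'k mpoly)))"
    by (simp add: algebra_simps)
  also have "\<dots> = lead_monom lt u + B"
    using lead_monom_times_binomial_ordered[OF u AB(3,2) True]
    by (simp add: lead_monom_def)
  finally show ?thesis
    using True by (simp add: lex_max_def)
next
  case False
  then show ?thesis
    using lead_monom_times_binomial_ordered[OF u AB(2,3)] lex_less_total[OF AB(2,3,1)]
    by (simp add: lex_max_def)
qed

lemma lex_less_pair_iff:
  assumes "u1 \<notin> {v1, v2}" "u2 \<notin> {v1, v2}" "v1 \<noteq> v2"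
    and "u1 \<in> V P" "u2 \<in> V P" "v1 \<in> V P" "v2 \<in> V P"
  shows "lex_less lt (X u1 + X u2) (X v1 + X v2) \<longleftrightarrow> (lt u1 v1 \<and> lt u2 v1) \<or> (lt u1 v2 \<and> lt u2 v2)"
proof
  assume "lex_less lt (X u1 + X u2) (X v1 + X v2)"
  then obtain w where w: "Poly_Mapping.lookup (X u1 + X u2) w < Poly_Mapping.lookup (X v1 + X v2) w"
    and above: "\<And>x. lt w x \<Longrightarrow> Poly_Mapping.lookup (X u1 + X u2) x = Poly_Mapping.lookup (X v1 + X v2) x"
    unfolding lex_less_def by blast
  have w_v: "w = v1 \<or> w = v2"
    using w by (auto simp: lookup_add lookup_single when_def split: if_splits)
  have "lt u w" if u: "u \<in> {u1, u2}" for u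
  proof -
    have "\<not> lt w u"
      using above[of u] u assms(1,2) by (auto simp: lookup_add lookup_single when_def)
    moreover have "u \<noteq> w"
      using u assms(1,2) w_v by auto
    ultimately show ?thesis
      using lt_total u w_v assms(4-7) by blast
  qed
  then show "(lt u1 v1 \<and> lt u2 v1) \<or> (lt u1 v2 \<and> lt u2 v2)"
    using w_v by blast
next
  assume lt_v: "(lt u1 v1 \<and> lt u2 v1) \<or> (lt u1 v2 \<and> lt u2 v2)"
  obtain w where w: "w \<in> {v1, v2}" and w_top: "\<And>v. v \<in> {v1, v2} \<Longrightarrow> v = w \<or> lt v w"
    using lt_total[OF assms(6,7,3)] by blast
  have u_w: "lt u1 w" "lt u2 w"
    using lt_v w_top lt_trans by blast+
  have "u1 \<noteq> w" "u2 \<noteq> w"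
    using u_w lt_irrefl by metis+
  then have "Poly_Mapping.lookup (X u1 + X u2) w < Poly_Mapping.lookup (X v1 + X v2) w"
    using w by (auto simp: lookup_add lookup_single)
  moreover have "Poly_Mapping.lookup (X u1 + X u2) x = Poly_Mapping.lookup (X v1 + X v2) x"
    if "lt w x" for x
  proof -
    have "x \<noteq> u1" "x \<noteq> u2"
      using that u_w lt_trans lt_irrefl by metis+
    moreover have "x \<noteq> v1" "x \<noteq> v2"
      using that w_top lt_trans lt_irrefl by blast+
    ultimately show ?thesis
      by (simp add: lookup_add lookup_single)
  qed
  ultimately show "lex_less lt (X u1 + X u2) (X v1 + X v2)"
    unfolding lex_less_def by blast
qed

lemma inner_interval_corner_monoms:
  assumes "inner_interval P a b"
  shows "X a + X b \<noteq> X (fst a, snd b) + X (fst b, snd a)"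
    and "supported (X a + X b)" and "supported (X (fst a, snd b) + X (fst b, snd a))"
proof -
  have "a \<in> interval a b" "b \<in> interval a b" "(fst a, snd b) \<in> interval a b" "(fst b, snd a) \<in> interval a b"
    using assms by (auto simp: inner_interval_iff interval_def)
  then show "supported (X a + X b)" and "supported (X (fst a, snd b) + X (fst b, snd a))"
    using interval_subset_V[OF assms] by auto
  show "X a + X b \<noteq> X (fst a, snd b) + X (fst b, snd a)"
    using assms by (intro monom_neqI[of a]) (auto simp: inner_interval_iff prod_eq_iff)
qed

lemma lead_monom_inner_minor:
  assumes "inner_interval P a b"
  shows "lead_monom lt (inner_minor a b :: 'k::comm_ring_1 mpoly) =
    lex_max lt (X a + X b) (X (fst a, snd b) + X (fst b, snd a))"
  unfolding inner_minor_eq using inner_interval_corner_monoms[OF assms] by (rule lead_monom_binomial)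

section \<open>Reduction to zero\<close>

lemma lead_monom_dvd_if_reduces_to_zero:
  fixes f :: "'k::field mpoly"
  assumes "reduces_to_zero P lt f" and "lead_monom lt f \<in> Poly_Mapping.keys f"
  shows "\<exists>a b t. inner_interval P a b \<and>
    lead_monom lt f = t + lead_monom lt (inner_minor a b :: 'k mpoly)"
proof -
  obtain u :: "'k mpoly \<Rightarrow> 'k mpoly" where u_in_S: "\<forall>g\<in>G P. in_S P (u g)"
    and f_eq: "f = (\<Sum>g\<in>G P. u g * g)"
    and bound: "\<forall>g\<in>G P. u g * g \<noteq> 0 \<longrightarrow> f \<noteq> 0 \<and> lex_le lt (lead_monom lt (u g * g)) (lead_monom lt f)"
    using assms(1) unfolding reduces_to_zero_def by blast
  have "Poly_Mapping.keys f \<subseteq> (\<Union>g\<in>G P. Poly_Mapping.keys (u g * g))"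
    unfolding f_eq by (rule keys_sum)
  then obtain g where g: "g \<in> G P" "lead_monom lt f \<in> Poly_Mapping.keys (u g * g)"
    using assms(2) by blast
  obtain a b where g_eq: "g = inner_minor a b" and inner: "inner_interval P a b"
    using g(1) unfolding G_def by blast
  note corners = inner_interval_corner_monoms[OF inner]
  have g_bin: "g = monomial (X a + X b) - monomial (X (fst a, snd b) + X (fst b, snd a))"
    using g_eq inner_minor_eq by simp
  have u: "u g \<noteq> 0" "\<forall>m\<in>Poly_Mapping.keys (u g). supported m"
    using g u_in_S by (auto simp: in_S_def)
  have lm_prod: "lead_monom lt (u g * g) = lead_monom lt (u g) + lead_monom lt g"
    using lead_monom_times_binomial[OF u corners] lead_monom_binomial[OF corners, where 'k = 'k]
    by (simp only: g_bin[symmetric])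
  have supp_prod: "supported m" if m: "m \<in> Poly_Mapping.keys (u g * g)" for m
  proof -
    obtain s t where "m = s + t" "s \<in> Poly_Mapping.keys (u g)" "t \<in> Poly_Mapping.keys g"
      using m keys_mult[of "u g" g] by blast
    then show ?thesis
      using u(2) corners(2,3) keys_binomial[OF corners(1), where 'k = 'k] g_bin by auto
  qed
  have prod_nonzero: "u g * g \<noteq> 0"
    using g(2) by auto
  have "lex_le lt (lead_monom lt f) (lead_monom lt (u g * g))"
    using lead_monom_greatest(2)[OF prod_nonzero] supp_prod g(2) by blast
  moreover have "lex_le lt (lead_monom lt (u g * g)) (lead_monom lt f)"
    using bound g(1) prod_nonzero by blast
  moreover have "supported (lead_monom lt (u g * g))"
    using lead_monom_greatest(1)[OF prod_nonzero] supp_prod by blast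
  ultimately have "lead_monom lt f = lead_monom lt (u g * g)"
    using lex_le_antisym supp_prod[OF g(2)] by blast
  with lm_prod g_eq inner show ?thesis
    by (intro exI[of _ a] exI[of _ b] exI[of _ "lead_monom lt (u g)"]) simp
qed

lemma reduces_to_zero_two_terms:
  fixes f c c' g g' :: "'k::field mpoly"
  assumes "finite P" "g \<in> G P" "g' \<in> G P" "in_S P c" "in_S P c'"
    and f: "f = c * g + c' * g'" "f \<noteq> 0"
    and bound: "c * g \<noteq> 0 \<Longrightarrow> lex_le lt (lead_monom lt (c * g)) (lead_monom lt f)"
    and bound': "c' * g' \<noteq> 0 \<Longrightarrow> lex_le lt (lead_monom lt (c' * g')) (lead_monom lt f)"
  shows "reduces_to_zero P lt f"
proof -
  \<comment> \<open>\<open>g = g'\<close> is allowed, so callers need not show that the two minors differ.\<close>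
  define u where "u x = (if x = g then c else 0) + (if x = g' then c' else 0)" for x
  have "(\<Sum>x\<in>G P. (if x = y then e else 0) * x) = e * y" if "y \<in> G P" for y e :: "'k mpoly"
    using that finite_G[OF assms(1), where 'k = 'k] by (simp add: if_distrib[of "\<lambda>x. x * _"] cong: if_cong)
  then have "f = (\<Sum>x\<in>G P. u x * x)"
    using f(1) assms(2,3) by (simp add: u_def distrib_right sum.distrib)
  moreover have "in_S P (u x)" for x
  proof -
    have "Poly_Mapping.keys (u x) \<subseteq> Poly_Mapping.keys c \<union> Poly_Mapping.keys c'"
      using keys_add[of "if x = g then c else 0" "if x = g' then c' else 0"]
      unfolding u_def by (auto split: if_splits)
    then show ?thesis
      using assms(4,5) unfolding in_S_def by blast
  qed
  moreover have "lex_le lt (lead_monom lt (u x * x)) (lead_monom lt f)" if "u x * x \<noteq> 0" for x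
  proof (cases "g = g'")
    case True
    then have "u x * x = (if x = g then f else 0)"
      using f(1) by (simp add: u_def distrib_right)
    then show ?thesis
      using that by (simp add: lex_le_def split: if_splits)
  next
    case False
    then have "u x * x = (if x = g then c * g else if x = g' then c' * g' else 0)"
      by (simp add: u_def)
    then show ?thesis
      using False that bound bound' by (simp split: if_splits)
  qed
  ultimately show ?thesis
    unfolding reduces_to_zero_def using f(2) by (intro exI[of _ u]) blast
qed

lemma reduces_to_zero_via_middle:
  fixes c c' g g' :: "'k::field mpoly"
  assumes "finite P" "g \<in> G P" "g' \<in> G P" "in_S P c" "in_S P c'"
    and cg: "c * g = monomial M - monomial T"
    and cg': "c' * g' = monomial T - monomial M'"
    and M: "M \<noteq> M'" "supported M" "supported M'" and "supported T"
    and T_less: "lex_less lt T (lex_max lt M M')"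
  shows "reduces_to_zero P lt (monomial M - monomial M' :: 'k mpoly)"
proof (rule reduces_to_zero_two_terms[OF assms(1-5)])
  let ?M = "lex_max lt M M'"
  have lm: "lead_monom lt (monomial M - monomial M' :: 'k mpoly) = ?M"
    using M by (rule lead_monom_binomial)
  have below: "lex_le lt M ?M" "lex_le lt M' ?M" "lex_le lt T ?M"
    using lex_le_lex_max[OF M(2,3)] T_less by (auto simp: lex_le_def)
  show "monomial M - monomial M' = c * g + c' * g'"
    by (simp add: cg cg')
  show "monomial M - monomial M' \<noteq> (0 :: 'k mpoly)"
    using keys_binomial[OF M(1), where 'k = 'k] by force
  show "lex_le lt (lead_monom lt (c * g)) (lead_monom lt (monomial M - monomial M' :: 'k mpoly))"
    if "c * g \<noteq> 0"
  proof -
    have "M \<noteq> T"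
      using that cg by auto
    then have "lead_monom lt (c * g) = lex_max lt M T"
      unfolding cg using M(2) \<open>supported T\<close> by (rule lead_monom_binomial)
    then show ?thesis
      unfolding lm using lex_max_le below by simp
  qed
  show "lex_le lt (lead_monom lt (c' * g')) (lead_monom lt (monomial M - monomial M' :: 'k mpoly))"
    if "c' * g' \<noteq> 0"
  proof -
    have "T \<noteq> M'"
      using that cg' by auto
    then have "lead_monom lt (c' * g') = lex_max lt T M'"
      unfolding cg' using \<open>supported T\<close> M(3) by (rule lead_monom_binomial)
    then show ?thesis
      unfolding lm using lex_max_le below by simp
  qed
qed

end

section \<open>Two inner intervals sharing the corner \<open>\<alpha>\<close>\<close>

locale shared_corner = P_ordered +
  fixes i j k l p q :: int
  assumes finite_P: "finite P"
    and coords: "i < k" "j < l" "k < p" "l < q"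
    and inner_ab: "inner_interval P (i, j) (k, l)"
    and inner_\<alpha>\<beta>: "inner_interval P (i, l) (p, q)"
begin

abbreviation a :: vertex where "a \<equiv> (i, j)"
abbreviation b :: vertex where "b \<equiv> (k, l)"
abbreviation \<alpha> :: vertex where "\<alpha> \<equiv> (i, l)"
abbreviation \<beta> :: vertex where "\<beta> \<equiv> (p, q)"
abbreviation d :: vertex where "d \<equiv> (k, j)"
abbreviation \<delta> :: vertex where "\<delta> \<equiv> (p, l)"
abbreviation \<gamma> :: vertex where "\<gamma> \<equiv> (i, q)"
abbreviation h :: vertex where "h \<equiv> (k, q)"
abbreviation r :: vertex where "r \<equiv> (p, j)"

abbreviation m1 :: monom where "m1 \<equiv> X d + X \<delta> + X \<gamma>"
abbreviation m2 :: monom where "m2 \<equiv> X \<beta> + X a + X b"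
abbreviation mid1 :: monom where "mid1 \<equiv> X a + X h + X \<delta>"
abbreviation mid2 :: monom where "mid2 \<equiv> X b + X \<gamma> + X r"

lemma vertices_in_V: "a \<in> V P" "b \<in> V P" "\<alpha> \<in> V P" "\<beta> \<in> V P" "d \<in> V P" "\<delta> \<in> V P" "\<gamma> \<in> V P" "h \<in> V P"
  using interval_subset_V[OF inner_ab] interval_subset_V[OF inner_\<alpha>\<beta>] coords
  by (auto simp: interval_def subset_iff)

lemma r_in_V: "inner_interval P d \<delta> \<Longrightarrow> r \<in> V P"
  using interval_subset_V[of P d \<delta>] coords by (auto simp: interval_def subset_iff)

lemma m1_neq_m2: "m1 \<noteq> m2"
  by (rule monom_neqI[of d]) (use coords in auto)

lemma supported_m1_m2: "supported m1" "supported m2"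
  using vertices_in_V by auto

lemma inner_b\<beta>: "inner_interval P b \<beta>"
  using inner_\<alpha>\<beta> coords by (auto simp: inner_interval_iff)

lemma inner_ah: "inner_interval P a h"
proof -
  have "(x, y) \<in> P" if "i \<le> x" "x < k" "j \<le> y" "y < q" for x y
  proof (cases "y < l")
    case True
    then show ?thesis
      using inner_ab that unfolding inner_interval_iff by auto
  next
    case False
    then show ?thesis
      using inner_\<alpha>\<beta> that coords unfolding inner_interval_iff by auto
  qed
  then show ?thesis
    using coords unfolding inner_interval_iff by auto
qed

lemma inner_a\<beta>_iff: "inner_interval P a \<beta> \<longleftrightarrow> inner_interval P d \<delta>"
proof
  assume inner_d\<delta>: "inner_interval P d \<delta>"
  have "(x, y) \<in> P" if "i \<le> x" "x < p" "j \<le> y" "y < q" for x y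
  proof -
    consider "l \<le> y" | "y < l" "x < k" | "y < l" "k \<le> x"
      by linarith
    then show ?thesis
      using inner_ab inner_\<alpha>\<beta> inner_d\<delta> that unfolding inner_interval_iff by cases auto
  qed
  then show "inner_interval P a \<beta>"
    using coords unfolding inner_interval_iff by auto
qed (use coords in \<open>auto simp: inner_interval_iff\<close>)

lemma lead_monoms_if_not_coprime:
  assumes "\<not> coprime_monom (lead_monom lt (inner_minor a b :: 'k::comm_ring_1 mpoly))
                           (lead_monom lt (inner_minor \<alpha> \<beta> :: 'k mpoly))"
  shows "lex_less lt (X a + X b) (X \<alpha> + X d)" and "lex_less lt (X \<gamma> + X \<delta>) (X \<alpha> + X \<beta>)"
proof -
  have lm_ab: "lead_monom lt (inner_minor a b :: 'k mpoly) = lex_max lt (X a + X b) (X \<alpha> + X d)"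
    using lead_monom_inner_minor[OF inner_ab] by simp
  have lm_\<alpha>\<beta>: "lead_monom lt (inner_minor \<alpha> \<beta> :: 'k mpoly) = lex_max lt (X \<alpha> + X \<beta>) (X \<gamma> + X \<delta>)"
    using lead_monom_inner_minor[OF inner_\<alpha>\<beta>] by simp
  show "lex_less lt (X a + X b) (X \<alpha> + X d)"
  proof (rule ccontr)
    assume "\<not> ?thesis"
    then have "lead_monom lt (inner_minor a b :: 'k mpoly) = X a + X b"
      using lm_ab by (simp add: lex_max_def)
    then show False
      using assms lm_\<alpha>\<beta> coords by (auto simp: coprime_monom_iff lex_max_def split: if_splits)
  qed
  show "lex_less lt (X \<gamma> + X \<delta>) (X \<alpha> + X \<beta>)"
  proof (rule ccontr)
    assume "\<not> ?thesis"
    moreover have "X \<alpha> + X \<beta> \<noteq> X \<gamma> + X \<delta>" "supported (X \<alpha> + X \<beta>)" "supported (X \<gamma> + X \<delta>)"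
      using inner_interval_corner_monoms[OF inner_\<alpha>\<beta>] by simp_all
    ultimately have "lex_less lt (X \<alpha> + X \<beta>) (X \<gamma> + X \<delta>)"
      using lex_less_total by blast
    then have "lead_monom lt (inner_minor \<alpha> \<beta> :: 'k mpoly) = X \<gamma> + X \<delta>"
      using lm_\<alpha>\<beta> by (simp add: lex_max_def)
    then show False
      using assms lm_ab coords by (auto simp: coprime_monom_iff lex_max_def split: if_splits)
  qed
qed

lemma reduces_to_zero_if_mid1_less:
  assumes "lex_less lt mid1 (lex_max lt m1 m2)"
  shows "reduces_to_zero P lt (monomial m1 - monomial m2 :: 'k::field mpoly)"
proof (rule reduces_to_zero_via_middle[where g = "inner_minor a h" and c = "- var \<delta>"
      and g' = "inner_minor b \<beta>" and c' = "- var a" and T = mid1])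
  show "- var \<delta> * inner_minor a h = monomial m1 - (monomial mid1 :: 'k mpoly)"
    by (simp add: inner_minor_eq var_times_binomial add_ac)
  show "- var a * inner_minor b \<beta> = monomial mid1 - (monomial m2 :: 'k mpoly)"
    by (simp add: inner_minor_eq var_times_binomial add_ac)
qed (use finite_P inner_ah inner_b\<beta> vertices_in_V m1_neq_m2 supported_m1_m2 assms in
      \<open>auto simp: G_def in_S_def var_def\<close>)

lemma reduces_to_zero_if_mid2_less:
  assumes "inner_interval P d \<delta>" and "lex_less lt mid2 (lex_max lt m1 m2)"
  shows "reduces_to_zero P lt (monomial m1 - monomial m2 :: 'k::field mpoly)"
proof (rule reduces_to_zero_via_middle[where g = "inner_minor d \<delta>" and c = "var \<gamma>"
      and g' = "inner_minor a \<beta>" and c' = "- var b" and T = mid2])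
  show "var \<gamma> * inner_minor d \<delta> = monomial m1 - (monomial mid2 :: 'k mpoly)"
    by (simp add: inner_minor_eq var_times_binomial add_ac)
  show "- var b * inner_minor a \<beta> = monomial mid2 - (monomial m2 :: 'k mpoly)"
    by (simp add: inner_minor_eq var_times_binomial add_ac)
qed (use finite_P assms inner_a\<beta>_iff vertices_in_V r_in_V[OF assms(1)] m1_neq_m2 supported_m1_m2 in
      \<open>auto simp: G_def in_S_def var_def\<close>)

lemma mid1_less_iff:
  "lex_less lt mid1 (lex_max lt m1 m2) \<longleftrightarrow>
     (lex_less lt m1 m2 \<and> ((lt h b \<and> lt \<delta> b) \<or> (lt h \<beta> \<and> lt \<delta> \<beta>))) \<or>
     (lex_less lt m2 m1 \<and> ((lt h d \<and> lt a d) \<or> (lt h \<gamma> \<and> lt a \<gamma>)))"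
proof -
  have "lex_less lt mid1 m2 \<longleftrightarrow> lex_less lt (X h + X \<delta>) (X b + X \<beta>)"
    using lex_less_add_left_iff[of lt "X a" "X h + X \<delta>" "X b + X \<beta>"] by (simp add: add_ac)
  also have "\<dots> \<longleftrightarrow> (lt h b \<and> lt \<delta> b) \<or> (lt h \<beta> \<and> lt \<delta> \<beta>)"
    using vertices_in_V coords by (intro lex_less_pair_iff) auto
  finally have below_m2: "lex_less lt mid1 m2 \<longleftrightarrow> (lt h b \<and> lt \<delta> b) \<or> (lt h \<beta> \<and> lt \<delta> \<beta>)" .
  have "lex_less lt mid1 m1 \<longleftrightarrow> lex_less lt (X h + X a) (X d + X \<gamma>)"
    using lex_less_add_left_iff[of lt "X \<delta>" "X h + X a" "X d + X \<gamma>"] by (simp add: add_ac)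
  also have "\<dots> \<longleftrightarrow> (lt h d \<and> lt a d) \<or> (lt h \<gamma> \<and> lt a \<gamma>)"
    using vertices_in_V coords by (intro lex_less_pair_iff) auto
  finally have below_m1: "lex_less lt mid1 m1 \<longleftrightarrow> (lt h d \<and> lt a d) \<or> (lt h \<gamma> \<and> lt a \<gamma>)" .
  show ?thesis
    using below_m1 below_m2 lex_less_total[OF supported_m1_m2 m1_neq_m2] lex_less_asym[OF supported_m1_m2]
    by (auto simp: lex_max_def)
qed

lemma inner_d\<delta>_and_mid2_less_iff:
  "inner_interval P d \<delta> \<and> lex_less lt mid2 (lex_max lt m1 m2) \<longleftrightarrow>
     (lex_less lt m1 m2 \<and> inner_interval P d \<delta> \<and> ((lt r a \<and> lt \<gamma> a) \<or> (lt r \<beta> \<and> lt \<gamma> \<beta>))) \<or>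
     (lex_less lt m2 m1 \<and> inner_interval P d \<delta> \<and> ((lt r d \<and> lt b d) \<or> (lt r \<delta> \<and> lt b \<delta>)))"
proof -
  have "lex_less lt mid2 (lex_max lt m1 m2) \<longleftrightarrow>
     (lex_less lt m1 m2 \<and> ((lt r a \<and> lt \<gamma> a) \<or> (lt r \<beta> \<and> lt \<gamma> \<beta>))) \<or>
     (lex_less lt m2 m1 \<and> ((lt r d \<and> lt b d) \<or> (lt r \<delta> \<and> lt b \<delta>)))"
    if inner_d\<delta>: "inner_interval P d \<delta>"
  proof -
    note V = vertices_in_V r_in_V[OF inner_d\<delta>]
    have "lex_less lt mid2 m2 \<longleftrightarrow> lex_less lt (X r + X \<gamma>) (X a + X \<beta>)"
      using lex_less_add_left_iff[of lt "X b" "X r + X \<gamma>" "X a + X \<beta>"] by (simp add: add_ac)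
    also have "\<dots> \<longleftrightarrow> (lt r a \<and> lt \<gamma> a) \<or> (lt r \<beta> \<and> lt \<gamma> \<beta>)"
      using V coords by (intro lex_less_pair_iff) auto
    finally have below_m2: "lex_less lt mid2 m2 \<longleftrightarrow> (lt r a \<and> lt \<gamma> a) \<or> (lt r \<beta> \<and> lt \<gamma> \<beta>)" .
    have "lex_less lt mid2 m1 \<longleftrightarrow> lex_less lt (X r + X b) (X d + X \<delta>)"
      using lex_less_add_left_iff[of lt "X \<gamma>" "X r + X b" "X d + X \<delta>"] by (simp add: add_ac)
    also have "\<dots> \<longleftrightarrow> (lt r d \<and> lt b d) \<or> (lt r \<delta> \<and> lt b \<delta>)"
      using V coords by (intro lex_less_pair_iff) auto
    finally have below_m1: "lex_less lt mid2 m1 \<longleftrightarrow> (lt r d \<and> lt b d) \<or> (lt r \<delta> \<and> lt b \<delta>)" .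
    show ?thesis
      using below_m1 below_m2 lex_less_total[OF supported_m1_m2 m1_neq_m2] lex_less_asym[OF supported_m1_m2]
      by (auto simp: lex_max_def)
  qed
  then show ?thesis
    by blast
qed

context
  assumes lead_ab: "lex_less lt (X a + X b) (X \<alpha> + X d)"
    and lead_\<alpha>\<beta>: "lex_less lt (X \<gamma> + X \<delta>) (X \<alpha> + X \<beta>)"
begin

lemma S_poly_eq:
  "S_poly lt (inner_minor a b) (inner_minor \<alpha> \<beta>) = (monomial m1 - monomial m2 :: 'k::field mpoly)"
proof -
  have corners: "X a + X b \<noteq> X \<alpha> + X d" "X \<alpha> + X \<beta> \<noteq> X \<gamma> + X \<delta>"
    using inner_interval_corner_monoms[OF inner_ab] inner_interval_corner_monoms[OF inner_\<alpha>\<beta>]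
    by simp_all
  have lm_ab: "lead_monom lt (inner_minor a b :: 'k mpoly) = X \<alpha> + X d"
    using lead_monom_inner_minor[OF inner_ab] lead_ab by (simp add: lex_max_def)
  have "\<not> lex_less lt (X \<alpha> + X \<beta>) (X \<gamma> + X \<delta>)"
    using lex_less_asym lead_\<alpha>\<beta> vertices_in_V by simp
  then have lm_\<alpha>\<beta>: "lead_monom lt (inner_minor \<alpha> \<beta> :: 'k mpoly) = X \<alpha> + X \<beta>"
    using lead_monom_inner_minor[OF inner_\<alpha>\<beta>] by (simp add: lex_max_def)
  have lc_ab: "lead_coeff_m lt (inner_minor a b :: 'k mpoly) = -1"
    unfolding lead_coeff_m_def lm_ab using corners by (simp add: inner_minor_eq lookup_minus lookup_single)
  have lc_\<alpha>\<beta>: "lead_coeff_m lt (inner_minor \<alpha> \<beta> :: 'k mpoly) = 1"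
    unfolding lead_coeff_m_def lm_\<alpha>\<beta> using corners by (simp add: inner_minor_eq lookup_minus lookup_single)
  have "(X \<alpha> + X \<beta>) - (X \<alpha> + X d) = X \<beta>"
    by (rule poly_mapping_eqI) (use coords in \<open>auto simp: lookup_add lookup_minus lookup_single when_def\<close>)
  then have lcm: "monom_lcm (X \<alpha> + X d) (X \<alpha> + X \<beta>) = X \<alpha> + X d + X \<beta>"
    unfolding monom_lcm_def by simp
  have lcm_ab: "monom_lcm (X \<alpha> + X d) (X \<alpha> + X \<beta>) - (X \<alpha> + X d) = X \<beta>"
    unfolding lcm by (rule add_diff_cancel_left')
  have "X \<alpha> + X d + X \<beta> = (X \<alpha> + X \<beta>) + X d"
    by (simp only: ac_simps)
  then have lcm_\<alpha>\<beta>: "monom_lcm (X \<alpha> + X d) (X \<alpha> + X \<beta>) - (X \<alpha> + X \<beta>) = X d"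
    unfolding lcm by (simp only: add_diff_cancel_left')
  have "S_poly lt (inner_minor a b) (inner_minor \<alpha> \<beta>) =
      - (monomial (X \<beta>) * inner_minor a b) - monomial (X d) * (inner_minor \<alpha> \<beta> :: 'k mpoly)"
    unfolding S_poly_def Let_def lm_ab lm_\<alpha>\<beta> lcm_ab lcm_\<alpha>\<beta> lc_ab lc_\<alpha>\<beta>
    by (simp add: single_uminus)
  also have "\<dots> = monomial m1 - monomial m2"
    by (simp add: inner_minor_eq right_diff_distrib mult_single add_ac)
  finally show ?thesis .
qed

lemma mid_less_if_lead_minor_dvd_m2:
  assumes inner: "inner_interval P a' b'"
    and dvd: "m2 = t + lead_monom lt (inner_minor a' b' :: 'k::comm_ring_1 mpoly)"
  shows "lex_less lt mid1 m2 \<or> (inner_interval P d \<delta> \<and> lex_less lt mid2 m2)"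
proof -
  obtain x1 y1 x2 y2 where ab': "a' = (x1, y1)" "b' = (x2, y2)"
    by (cases a', cases b') auto
  have proper: "x1 < x2" "y1 < y2"
    using inner by (simp_all add: ab' inner_interval_iff)
  let ?D = "X (x1, y1) + X (x2, y2)" and ?A = "X (x1, y2) + X (x2, y1)"
  have corners: "?D \<noteq> ?A" "supported ?D" "supported ?A"
    using inner_interval_corner_monoms[OF inner] by (simp_all add: ab')
  have "lead_monom lt (inner_minor a' b' :: 'k mpoly) = lex_max lt ?D ?A"
    using lead_monom_inner_minor[OF inner, where 'k = 'k] by (simp add: ab')
  then have "Poly_Mapping.keys (lex_max lt ?D ?A) \<subseteq> Poly_Mapping.keys m2"
    unfolding dvd by simp
  then have keys_lm: "Poly_Mapping.keys (lex_max lt ?D ?A) \<subseteq> {\<beta>, a, b}"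
    by (simp add: insert_commute)
  have A_less: "lex_less lt ?A ?D"
  proof (rule ccontr)
    assume "\<not> lex_less lt ?A ?D"
    then have "lex_max lt ?D ?A = ?A"
      using lex_less_total[OF corners(2,3,1)] by (simp add: lex_max_def)
    then have "(x1, y2) \<in> {\<beta>, a, b}" "(x2, y1) \<in> {\<beta>, a, b}"
      using keys_lm by simp_all
    then show False
      using proper coords by auto
  qed
  then have "lex_max lt ?D ?A = ?D"
    using lex_less_asym[OF corners(3,2)] by (simp add: lex_max_def)
  then have "(x1, y1) \<in> {\<beta>, a, b}" "(x2, y2) \<in> {\<beta>, a, b}"
    using keys_lm by simp_all
  then consider "a' = a" "b' = b" | "a' = b" "b' = \<beta>" | "a' = a" "b' = \<beta>"
    using proper coords unfolding ab' by auto
  then show ?thesis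
  proof cases
    case 1
    then show ?thesis
      using A_less lead_ab lex_less_asym corners(2,3) by (simp add: ab')
  next
    case 2
    then have "lex_less lt (X h + X \<delta>) (X b + X \<beta>)"
      using A_less by (simp add: ab')
    then have "lex_less lt mid1 m2"
      using lex_less_add_left_iff[of lt "X a" "X h + X \<delta>" "X b + X \<beta>"] by (simp add: add_ac)
    then show ?thesis ..
  next
    case 3
    then have "lex_less lt (X \<gamma> + X r) (X a + X \<beta>)"
      using A_less by (simp add: ab')
    then have "lex_less lt mid2 m2"
      using lex_less_add_left_iff[of lt "X b" "X \<gamma> + X r" "X a + X \<beta>"] by (simp add: add_ac)
    moreover have "inner_interval P d \<delta>"
      using inner 3 inner_a\<beta>_iff by simp
    ultimately show ?thesis
      by blast
  qed
qed

lemma mid_less_if_lead_minor_dvd_m1: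
  assumes inner: "inner_interval P a' b'"
    and dvd: "m1 = t + lead_monom lt (inner_minor a' b' :: 'k::comm_ring_1 mpoly)"
  shows "lex_less lt mid1 m1 \<or> (inner_interval P d \<delta> \<and> lex_less lt mid2 m1)"
proof -
  obtain x1 y1 x2 y2 where ab': "a' = (x1, y1)" "b' = (x2, y2)"
    by (cases a', cases b') auto
  have proper: "x1 < x2" "y1 < y2"
    using inner by (simp_all add: ab' inner_interval_iff)
  let ?D = "X (x1, y1) + X (x2, y2)" and ?A = "X (x1, y2) + X (x2, y1)"
  have corners: "?D \<noteq> ?A" "supported ?D" "supported ?A"
    using inner_interval_corner_monoms[OF inner] by (simp_all add: ab')
  have "lead_monom lt (inner_minor a' b' :: 'k mpoly) = lex_max lt ?D ?A"
    using lead_monom_inner_minor[OF inner, where 'k = 'k] by (simp add: ab')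
  then have "Poly_Mapping.keys (lex_max lt ?D ?A) \<subseteq> Poly_Mapping.keys m1"
    unfolding dvd by simp
  then have keys_lm: "Poly_Mapping.keys (lex_max lt ?D ?A) \<subseteq> {d, \<delta>, \<gamma>}"
    by (simp add: insert_commute)
  show ?thesis
  proof (cases "lex_less lt ?D ?A")
    case True
    then have "lex_max lt ?D ?A = ?A"
      by (simp add: lex_max_def)
    then have "(x1, y2) \<in> {d, \<delta>, \<gamma>}" "(x2, y1) \<in> {d, \<delta>, \<gamma>}"
      using keys_lm by simp_all
    then consider "a' = a" "b' = h" | "a' = \<alpha>" "b' = \<beta>"
      using proper coords unfolding ab' by auto
    then show ?thesis
    proof cases
      case 1
      then have "lex_less lt (X a + X h) (X \<gamma> + X d)"
        using True by (simp add: ab')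
      then have "lex_less lt mid1 m1"
        using lex_less_add_left_iff[of lt "X \<delta>" "X a + X h" "X \<gamma> + X d"] by (simp add: add_ac)
      then show ?thesis ..
    next
      case 2
      then show ?thesis
        using True lead_\<alpha>\<beta> lex_less_asym corners(2,3) by (simp add: ab')
    qed
  next
    case False
    then have "lex_max lt ?D ?A = ?D"
      by (simp add: lex_max_def)
    then have "(x1, y1) \<in> {d, \<delta>, \<gamma>}" "(x2, y2) \<in> {d, \<delta>, \<gamma>}"
      using keys_lm by simp_all
    then have ab'_d\<delta>: "a' = d" "b' = \<delta>"
      using proper coords unfolding ab' by auto
    have "lex_less lt ?A ?D"
      using False lex_less_total[OF corners(2,3,1)] by blast
    then have "lex_less lt (X b + X r) (X d + X \<delta>)"
      using ab'_d\<delta> by (simp add: ab')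
    then have "lex_less lt mid2 m1"
      using lex_less_add_left_iff[of lt "X \<gamma>" "X b + X r" "X d + X \<delta>"] by (simp add: add_ac)
    moreover have "inner_interval P d \<delta>"
      using inner ab'_d\<delta> by simp
    ultimately show ?thesis
      by blast
  qed
qed

lemma reduces_to_zero_S_iff:
  "reduces_to_zero P lt (monomial m1 - monomial m2 :: 'k::field mpoly) \<longleftrightarrow>
     lex_less lt mid1 (lex_max lt m1 m2) \<or>
     (inner_interval P d \<delta> \<and> lex_less lt mid2 (lex_max lt m1 m2))"
proof
  assume red: "reduces_to_zero P lt (monomial m1 - monomial m2 :: 'k mpoly)"
  have "lead_monom lt (monomial m1 - monomial m2 :: 'k mpoly) = lex_max lt m1 m2"
    using m1_neq_m2 supported_m1_m2 by (rule lead_monom_binomial)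
  moreover have "lex_max lt m1 m2 \<in> Poly_Mapping.keys (monomial m1 - monomial m2 :: 'k mpoly)"
    using keys_binomial[OF m1_neq_m2, where 'k = 'k] by (simp add: lex_max_def)
  ultimately obtain a' b' t where inner: "inner_interval P a' b'"
    and dvd: "lex_max lt m1 m2 = t + lead_monom lt (inner_minor a' b' :: 'k mpoly)"
    using lead_monom_dvd_if_reduces_to_zero[OF red] by metis
  consider "lex_max lt m1 m2 = m1" | "lex_max lt m1 m2 = m2"
    using lex_max_cases by blast
  then show "lex_less lt mid1 (lex_max lt m1 m2) \<or>
      (inner_interval P d \<delta> \<and> lex_less lt mid2 (lex_max lt m1 m2))"
  proof cases
    case 1
    show ?thesis
      unfolding 1 by (rule mid_less_if_lead_minor_dvd_m1[OF inner dvd[unfolded 1]])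
  next
    case 2
    show ?thesis
      unfolding 2 by (rule mid_less_if_lead_minor_dvd_m2[OF inner dvd[unfolded 2]])
  qed
next
  assume "lex_less lt mid1 (lex_max lt m1 m2) \<or>
      (inner_interval P d \<delta> \<and> lex_less lt mid2 (lex_max lt m1 m2))"
  then show "reduces_to_zero P lt (monomial m1 - monomial m2 :: 'k mpoly)"
    using reduces_to_zero_if_mid1_less reduces_to_zero_if_mid2_less by blast
qed

end

end

theorem mainTheorem4:
  fixes P :: "vertex set" and lt :: "vertex \<Rightarrow> vertex \<Rightarrow> bool"
    and i j k l p q :: int
  assumes "collection_of_cells P"
    and "i < k" and "j < l" and "p > k" and "q > l"
    and "inner_interval P (i, j) (k, l)"
    and "inner_interval P (i, l) (p, q)"
    and "P_order P lt"
    and "\<not> coprime_monom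
            (lead_monom lt (inner_minor (i, j) (k, l) :: ('k::field) mpoly))
            (lead_monom lt (inner_minor (i, l) (p, q) :: 'k mpoly))"
  shows "reduces_to_zero P lt
           (S_poly lt (inner_minor (i, j) (k, l)) (inner_minor (i, l) (p, q)) :: 'k mpoly)
    \<longleftrightarrow>
    (let a = (i, j); b = (k, l); \<alpha> = (i, l); \<beta> = (p, q);
         d = (k, j); \<delta> = (p, l); \<gamma> = (i, q); h = (k, q); r = (p, j);
         m1 = Poly_Mapping.single d 1 + Poly_Mapping.single \<delta> 1 + Poly_Mapping.single \<gamma> 1;
         m2 = Poly_Mapping.single \<beta> 1 + Poly_Mapping.single a 1 + Poly_Mapping.single b 1
     in (lex_less lt m1 m2 \<and> ((lt h b \<and> lt \<delta> b) \<or> (lt h \<beta> \<and> lt \<delta> \<beta>)))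
      \<or> (lex_less lt m1 m2 \<and> inner_interval P d \<delta> \<and> ((lt r a \<and> lt \<gamma> a) \<or> (lt r \<beta> \<and> lt \<gamma> \<beta>)))
      \<or> (lex_less lt m2 m1 \<and> ((lt h d \<and> lt a d) \<or> (lt h \<gamma> \<and> lt a \<gamma>)))
      \<or> (lex_less lt m2 m1 \<and> inner_interval P d \<delta> \<and> ((lt r d \<and> lt b d) \<or> (lt r \<delta> \<and> lt b \<delta>))))"
proof -
  interpret shared_corner P lt i j k l p q
    using assms by unfold_locales (auto simp: collection_of_cells_def)
  note lead = lead_monoms_if_not_coprime[OF assms(9)]
  show ?thesis
    unfolding Let_def S_poly_eq[OF lead] reduces_to_zero_S_iff[OF lead] mid1_less_iff
      inner_d\<delta>_and_mid2_less_iff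
    by blast
qed

end
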